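(* Let $1\leq n\leq N$, let $\mathcal{G}$ be a class of classifiers $g:\mathcal{X}\to\{-1,+1\}$ of finite VC dimension $V$, and let $\boldsymbol{\epsilon}_N$ be the indicator vector of a rejective sampling design of size $n$ with first-order inclusion probabilities $\boldsymbol{\pi}_N=(\pi_1,\ldots,\pi_N)$ (all $\pi_i>0$), independent of $\mathcal{D}_N$. Set $\kappa_N=(n/N)/\min_{i\leq N}\pi_i$. Then for every $\delta\in(0,1)$, with probability at least $1-\delta$, $$\sup_{g\in\mathcal{G}}\big|\bar{L}_{\boldsymbol{\epsilon}_N}(g)-\widehat{L}_N(g)\big|\leq 2\kappa_N\frac{\log(2/\delta)+V\log(N+1)}{3n}+\sqrt{2\kappa_N\frac{\log(2/\delta)+V\log(N+1)}{n}}.$$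
   Context: $(X,Y)$ is a random pair with values in $\mathcal{X}\times\{-1,+1\}$ and $\mathcal{D}_N=\{(X_i,Y_i):1\leq i\leq N\}$ consists of $N$ i.i.d. copies of $(X,Y)$. A rejective sampling design of size $n$ on $\{1,\ldots,N\}$ with canonical parameters $\mathbf{p}_N\in(0,1)^N$, $\sum_i p_i=n$, draws a random subset $S$ with $\mathbb{P}(S=s)=C\prod_{i\in s}p_i\prod_{i\notin s}(1-p_i)$ if $\#s=n$ and $0$ otherwise ($C$ a normalizing constant); $\epsilon_i=\mathbb{I}\{i\in S\}$ and $\pi_i=\mathbb{P}(i\in S)$. The empirical risk is $\widehat{L}_N(g)=\frac1N\sum_{i=1}^N\mathbb{I}\{g(X_i)\neq Y_i\}$ and the Horvitz–Thompson (HT) empirical risk is $\bar{L}_{\boldsymbol{\epsilon}_N}(g)=\frac1N\sum_{i=1}^N\frac{\epsilon_i}{\pi_i}\mathbb{I}\{g(X_i)\neq Y_i\}$. *)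

theory Defs
  imports "HOL-Analysis.Analysis"
begin

text \<open>Rejective sampling design of size n with
canonical parameters p: P(S = s) = C * prod_{i in s} p i * prod_{i notin s} (1 - p i)
for s a subset of {1..N} with card s = n, and 0 otherwise.\<close>

definition samples :: "nat \<Rightarrow> nat \<Rightarrow> nat set set" where
  "samples N n = {s. s \<subseteq> {1..N} \<and> card s = n}"

definition rej_weight :: "(nat \<Rightarrow> real) \<Rightarrow> nat \<Rightarrow> nat set \<Rightarrow> real" where
  "rej_weight p N s = (\<Prod>i\<in>s. p i) * (\<Prod>i\<in>{1..N} - s. 1 - p i)"

definition rej_prob :: "(nat \<Rightarrow> real) \<Rightarrow> nat \<Rightarrow> nat \<Rightarrow> (nat set \<Rightarrow> bool) \<Rightarrow> real" where
  "rej_prob p N n A =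
     (\<Sum>s\<in>{s\<in>samples N n. A s}. rej_weight p N s) / (\<Sum>s\<in>samples N n. rej_weight p N s)"

definition incl_prob :: "(nat \<Rightarrow> real) \<Rightarrow> nat \<Rightarrow> nat \<Rightarrow> nat \<Rightarrow> real" where
  "incl_prob p N n i = rej_prob p N n (\<lambda>s. i \<in> s)"

definition emp_risk :: "nat \<Rightarrow> (nat \<Rightarrow> 'a) \<Rightarrow> (nat \<Rightarrow> int) \<Rightarrow> ('a \<Rightarrow> int) \<Rightarrow> real" where
  "emp_risk N x y g = (1 / real N) * (\<Sum>i=1..N. if g (x i) \<noteq> y i then 1 else 0)"

definition HT_risk :: "(nat \<Rightarrow> real) \<Rightarrow> nat \<Rightarrow> nat \<Rightarrow> (nat \<Rightarrow> 'a) \<Rightarrow> (nat \<Rightarrow> int)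
    \<Rightarrow> nat set \<Rightarrow> ('a \<Rightarrow> int) \<Rightarrow> real" where
  "HT_risk p N n x y s g = (1 / real N) *
     (\<Sum>i=1..N. (if i \<in> s then 1 else 0) / incl_prob p N n i * (if g (x i) \<noteq> y i then 1 else 0))"

definition shatters :: "('a \<Rightarrow> int) set \<Rightarrow> 'a set \<Rightarrow> bool" where
  "shatters G C \<longleftrightarrow> (\<forall>B\<subseteq>C. \<exists>g\<in>G. {c\<in>C. g c = 1} = B)"

definition has_VC_dim :: "('a \<Rightarrow> int) set \<Rightarrow> nat \<Rightarrow> bool" where
  "has_VC_dim G V \<longleftrightarrow>
     (\<exists>C. finite C \<and> card C = V \<and> shatters G C) \<and>
     (\<forall>C. finite C \<and> shatters G C \<longrightarrow> card C \<le> V)"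

end

theory Submission
  imports Defs
begin

text \<open>Given the data, \<open>HT_risk g - emp_risk g\<close> is the linear statistic
  \<open>\<Sum>i. c\<^sub>i (\<epsilon>\<^sub>i - \<pi>\<^sub>i)\<close> of the sample indicators, with
  \<open>0 \<le> c\<^sub>i \<le> \<beta> = 1 / (N min \<pi>)\<close> and \<open>\<Sum>i. \<pi>\<^sub>i c\<^sub>i\<^sup>2 \<le> \<beta>\<close>.
  Newton's inequalities for the elementary symmetric functions of the odds
  \<open>p\<^sub>i / (1 - p\<^sub>i)\<close> show that a rejective sample is negatively correlated:
  \<open>P(A \<subseteq> S) \<le> \<Prod>i\<in>A. \<pi>\<^sub>i\<close>.  Hence, for exponents of one sign (the other sign by
  passing to the complementary sample), its moment generating function is dominated by
  that of independent Bernoulli draws, and the Chernoff argument gives Bernstein's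
  inequality with tail \<open>2 e\<^sup>-\<^sup>L\<close>.  A classifier enters only through its error set on
  the \<open>N\<close> points; by the Sauer--Shelah lemma there are at most \<open>(N + 1)\<^sup>V\<close> of them,
  and a union bound with \<open>L = log (2 / \<delta>) + V log (N + 1)\<close> concludes.\<close>

section \<open>Rejective sampling designs\<close>

definition ksubsets :: "'a set \<Rightarrow> nat \<Rightarrow> 'a set set" where
  "ksubsets U k = {s. s \<subseteq> U \<and> card s = k}"

text \<open>\<open>rej_expect w U k\<close> is the expectation under rejective sampling of \<open>k\<close> units
  from \<open>U\<close> with odds \<open>w\<close>, i.e. \<open>P(S = s) \<propto> \<Prod>i\<in>s. w i\<close> for \<open>card s = k\<close>.\<close>

definition rej_sum :: "('a \<Rightarrow> real) \<Rightarrow> 'a set \<Rightarrow> nat \<Rightarrow> ('a set \<Rightarrow> real) \<Rightarrow> real" where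
  "rej_sum w U k f = (\<Sum>s\<in>ksubsets U k. (\<Prod>i\<in>s. w i) * f s)"

definition rej_expect :: "('a \<Rightarrow> real) \<Rightarrow> 'a set \<Rightarrow> nat \<Rightarrow> ('a set \<Rightarrow> real) \<Rightarrow> real" where
  "rej_expect w U k f = rej_sum w U k f / rej_sum w U k (\<lambda>_. 1)"

lemma finite_ksubsets: "finite U \<Longrightarrow> finite (ksubsets U k)"
  unfolding ksubsets_def by (rule finite_subset[of _ "Pow U"]) auto

lemma ksubsets_0: "finite U \<Longrightarrow> ksubsets U 0 = {{}}"
  unfolding ksubsets_def by (auto dest: finite_subset)

lemma ksubsets_remove:
  assumes "finite U" "a \<in> U" "k \<ge> 1"
  shows "ksubsets U k = ksubsets (U - {a}) k \<union> insert a ` ksubsets (U - {a}) (k - 1)"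
proof (intro equalityI subsetI)
  fix s assume s: "s \<in> ksubsets U k"
  have "finite s" using s assms(1) unfolding ksubsets_def by (auto dest: finite_subset)
  then have "a \<in> s \<Longrightarrow> s - {a} \<in> ksubsets (U - {a}) (k - 1) \<and> s = insert a (s - {a})"
    using s unfolding ksubsets_def by auto
  then show "s \<in> ksubsets (U - {a}) k \<union> insert a ` ksubsets (U - {a}) (k - 1)"
    using s unfolding ksubsets_def by blast
next
  fix s assume "s \<in> ksubsets (U - {a}) k \<union> insert a ` ksubsets (U - {a}) (k - 1)"
  then show "s \<in> ksubsets U k"
  proof
    assume "s \<in> insert a ` ksubsets (U - {a}) (k - 1)"
    then obtain t where "t \<subseteq> U - {a}" "card t = k - 1" "s = insert a t"
      unfolding ksubsets_def by auto
    moreover have "finite t" "a \<notin> t"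
      using \<open>t \<subseteq> U - {a}\<close> assms(1) by (auto dest: finite_subset)
    ultimately show ?thesis using assms unfolding ksubsets_def by auto
  qed (auto simp: ksubsets_def)
qed

lemma rej_sum_0: "finite U \<Longrightarrow> rej_sum w U 0 f = f {}"
  by (simp add: rej_sum_def ksubsets_0)

lemma rej_sum_remove:
  assumes "finite U" "a \<in> U" "k \<ge> 1"
  shows "rej_sum w U k f
    = rej_sum w (U - {a}) k f + w a * rej_sum w (U - {a}) (k - 1) (\<lambda>t. f (insert a t))"
proof -
  let ?K = "ksubsets (U - {a}) k" and ?K' = "ksubsets (U - {a}) (k - 1)"
  have a_notin: "t \<in> ?K' \<Longrightarrow> a \<notin> t \<and> finite t" for t
    using assms(1) unfolding ksubsets_def by (auto dest: finite_subset)
  have "rej_sum w U k f = (\<Sum>s\<in>?K. (\<Prod>i\<in>s. w i) * f s)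
      + (\<Sum>s\<in>insert a ` ?K'. (\<Prod>i\<in>s. w i) * f s)"
    unfolding rej_sum_def ksubsets_remove[OF assms]
    by (rule sum.union_disjoint) (auto simp: finite_ksubsets assms(1) ksubsets_def)
  also have "(\<Sum>s\<in>insert a ` ?K'. (\<Prod>i\<in>s. w i) * f s)
      = (\<Sum>t\<in>?K'. w a * ((\<Prod>i\<in>t. w i) * f (insert a t)))"
    using a_notin by (subst sum.reindex) (auto intro!: inj_onI sum.cong dest: Diff_insert_absorb)
  finally show ?thesis
    unfolding rej_sum_def by (simp add: sum_distrib_left)
qed

lemma rej_sum_remove_indicator:
  assumes "finite U" "a \<in> U" "k \<ge> 1"
  shows "rej_sum w U k (\<lambda>s. of_bool (a \<in> s) * f s)
    = w a * rej_sum w (U - {a}) (k - 1) (\<lambda>t. f (insert a t))"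
proof -
  have "rej_sum w (U - {a}) k (\<lambda>s. of_bool (a \<in> s) * f s) = 0"
    unfolding rej_sum_def ksubsets_def by (auto intro!: sum.neutral)
  then show ?thesis using rej_sum_remove[OF assms, of w "\<lambda>s. of_bool (a \<in> s) * f s"] by simp
qed

lemma rej_sum_nonneg:
  "(\<And>i. i \<in> U \<Longrightarrow> w i \<ge> 0) \<Longrightarrow> (\<And>s. s \<in> ksubsets U k \<Longrightarrow> f s \<ge> 0) \<Longrightarrow> rej_sum w U k f \<ge> 0"
  unfolding rej_sum_def ksubsets_def by (intro sum_nonneg mult_nonneg_nonneg prod_nonneg) auto

lemma rej_sum_mono:
  "(\<And>i. i \<in> U \<Longrightarrow> w i \<ge> 0) \<Longrightarrow> (\<And>s. s \<in> ksubsets U k \<Longrightarrow> f s \<le> g s)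
    \<Longrightarrow> rej_sum w U k f \<le> rej_sum w U k g"
  unfolding rej_sum_def ksubsets_def by (intro sum_mono mult_left_mono prod_nonneg) auto

lemma rej_sum_pos:
  assumes "finite U" "k \<le> card U" "\<And>i. i \<in> U \<Longrightarrow> w i > 0"
  shows "rej_sum w U k (\<lambda>_. 1) > 0"
proof -
  obtain s where "s \<subseteq> U" "card s = k" using obtain_subset_with_card_n[OF assms(2)] by blast
  then have s: "s \<in> ksubsets U k" unfolding ksubsets_def by simp
  have nonneg: "t \<in> ksubsets U k \<Longrightarrow> 0 \<le> (\<Prod>i\<in>t. w i) * 1" for t
    using assms(3) unfolding ksubsets_def by (simp add: prod_nonneg less_imp_le subset_iff)
  have "0 < (\<Prod>i\<in>s. w i) * 1" using s assms(3) unfolding ksubsets_def by (auto intro: prod_pos)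
  also have "\<dots> \<le> rej_sum w U k (\<lambda>_. 1)"
    unfolding rej_sum_def by (rule member_le_sum) (use s nonneg assms(1) finite_ksubsets in auto)
  finally show ?thesis .
qed

lemma rej_sum_cong: "(\<And>s. s \<in> ksubsets U k \<Longrightarrow> f s = g s) \<Longrightarrow> rej_sum w U k f = rej_sum w U k g"
  unfolding rej_sum_def by auto

lemma rej_expect_cong:
  "(\<And>s. s \<in> ksubsets U k \<Longrightarrow> f s = g s) \<Longrightarrow> rej_expect w U k f = rej_expect w U k g"
  unfolding rej_expect_def using rej_sum_cong[of U k f g w] by simp

lemma rej_expect_add: "rej_expect w U k (\<lambda>s. f s + g s) = rej_expect w U k f + rej_expect w U k g"
  unfolding rej_expect_def rej_sum_def by (simp add: distrib_left sum.distrib add_divide_distrib)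

lemma rej_expect_cmult: "rej_expect w U k (\<lambda>s. c * f s) = c * rej_expect w U k f"
  unfolding rej_expect_def rej_sum_def by (simp add: sum_distrib_left mult_ac)

lemma rej_expect_sum: "rej_expect w U k (\<lambda>s. \<Sum>j\<in>J. f j s) = (\<Sum>j\<in>J. rej_expect w U k (f j))"
  unfolding rej_expect_def rej_sum_def
  by (simp add: sum_distrib_left sum.swap[of _ J] sum_divide_distrib)

lemma rej_expect_nonneg:
  "(\<And>i. i \<in> U \<Longrightarrow> w i \<ge> 0) \<Longrightarrow> (\<And>s. s \<in> ksubsets U k \<Longrightarrow> f s \<ge> 0) \<Longrightarrow> rej_expect w U k f \<ge> 0"
  unfolding rej_expect_def by (intro divide_nonneg_nonneg rej_sum_nonneg) auto

lemma rej_expect_mono: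
  "(\<And>i. i \<in> U \<Longrightarrow> w i \<ge> 0) \<Longrightarrow> (\<And>s. s \<in> ksubsets U k \<Longrightarrow> f s \<le> g s)
    \<Longrightarrow> rej_expect w U k f \<le> rej_expect w U k g"
  unfolding rej_expect_def by (intro divide_right_mono rej_sum_mono rej_sum_nonneg) auto

lemma rej_expect_one:
  "finite U \<Longrightarrow> k \<le> card U \<Longrightarrow> (\<And>i. i \<in> U \<Longrightarrow> w i > 0) \<Longrightarrow> rej_expect w U k (\<lambda>_. 1) = 1"
  unfolding rej_expect_def using rej_sum_pos[of U k w] by simp

section \<open>Negative dependence of the sample indicators\<close>

abbreviation rej_incl :: "('a \<Rightarrow> real) \<Rightarrow> 'a set \<Rightarrow> nat \<Rightarrow> 'a \<Rightarrow> real" where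
  "rej_incl w U k i \<equiv> rej_expect w U k (\<lambda>s. of_bool (i \<in> s))"

definition elem_sym :: "('a \<Rightarrow> real) \<Rightarrow> 'a set \<Rightarrow> int \<Rightarrow> real" where
  "elem_sym w R j = (if j < 0 then 0 else rej_sum w R (nat j) (\<lambda>_. 1))"

lemma elem_sym_insert:
  assumes "finite R" "x \<notin> R"
  shows "elem_sym w (insert x R) j = elem_sym w R j + w x * elem_sym w R (j - 1)"
proof -
  consider "j < 0" | "j = 0" | "j \<ge> 1" by linarith
  then show ?thesis
  proof cases
    case 3
    then have "nat j - 1 = nat (j - 1)" by simp
    then show ?thesis
      using rej_sum_remove[of "insert x R" x "nat j" w "\<lambda>_. 1"] assms 3 by (simp add: elem_sym_def)
  qed (use assms in \<open>simp_all add: elem_sym_def rej_sum_0\<close>)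
qed

text \<open>Newton's inequalities in the unnormalised form
  \<open>e\<^sub>a\<^sub>-\<^sub>1 e\<^sub>b\<^sub>+\<^sub>1 \<le> e\<^sub>a e\<^sub>b\<close> (\<open>a \<le> b\<close>), proved by induction on the
  set of weights: adding a weight \<open>t\<close> turns \<open>e\<^sub>j\<close> into \<open>e\<^sub>j + t e\<^sub>j\<^sub>-\<^sub>1\<close>,
  and the cross terms are controlled by three instances of the hypothesis.\<close>

lemma elem_sym_newton:
  assumes "finite R" "\<And>i. i \<in> R \<Longrightarrow> w i \<ge> 0" "a \<le> b"
  shows "elem_sym w R (a - 1) * elem_sym w R (b + 1) \<le> elem_sym w R a * elem_sym w R b"
  using assms
proof (induction R arbitrary: a b rule: finite_induct)
  case empty
  have "ksubsets ({} :: 'a set) k = (if k = 0 then {{}} else {})" for k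
    by (auto simp: ksubsets_def)
  then have "elem_sym w {} j = of_bool (j = 0)" for j
    by (simp add: elem_sym_def rej_sum_def)
  then show ?case using empty.prems by (auto simp: of_bool_def)
next
  case (insert x R)
  define E where "E = elem_sym w R"
  define t where "t = w x"
  have IH: "E (a' - 1) * E (b' + 1) \<le> E a' * E b'" if "a' \<le> b'" for a' b'
    unfolding E_def using insert.prems(1) by (intro insert.IH that) simp
  have t: "t \<ge> 0" using insert.prems(1) unfolding t_def by simp
  have ab: "a \<le> b" by (rule insert.prems(2))
  have h0: "E (a-1) * E (b+1) \<le> E a * E b" using IH ab .
  have h2: "E (a-2) * E b \<le> E (a-1) * E (b-1)"
    using IH[of "a-1" "b-1"] ab by (simp add: algebra_simps)
  have h1: "E (a-2) * E (b+1) \<le> E a * E (b-1)"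
  proof (cases "a = b")
    case True then show ?thesis using IH[of "a-1" "b"] by (simp add: algebra_simps)
  next
    case False
    have "E (a-2) * E (b+1) \<le> E (a-1) * E b"
      using IH[of "a-1" "b"] ab by (simp add: algebra_simps)
    also have "\<dots> \<le> E a * E (b-1)"
      using IH[of "a" "b-1"] ab False by (simp add: algebra_simps)
    finally show ?thesis .
  qed
  have "(E (a-1) + t * E (a-2)) * (E (b+1) + t * E b) \<le> (E a + t * E (a-1)) * (E b + t * E (b-1))"
    using h0 mult_left_mono[OF h1 t] mult_left_mono[OF h2 mult_nonneg_nonneg[OF t t]]
    by (simp add: algebra_simps)
  moreover have "elem_sym w (insert x R) j = E j + t * E (j - 1)" for j
    unfolding E_def t_def by (rule elem_sym_insert[OF insert.hyps])
  moreover have "a - 1 - 1 = a - 2" by simp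
  ultimately show ?case by simp
qed

lemma rej_sum_newton:
  assumes "finite R" "\<And>i. i \<in> R \<Longrightarrow> w i \<ge> 0"
  shows "rej_sum w R m (\<lambda>_. 1) * rej_sum w R (m + 2) (\<lambda>_. 1) \<le> (rej_sum w R (m + 1) (\<lambda>_. 1))\<^sup>2"
  using elem_sym_newton[OF assms order_refl[of "int (m + 1)"]]
  by (simp add: elem_sym_def power2_eq_square nat_add_distrib add.commute)

lemma rej_incl_eq:
  assumes "finite U" "a \<in> U" "k \<ge> 1"
  shows "rej_incl w U k a = w a * rej_sum w (U - {a}) (k - 1) (\<lambda>_. 1) / rej_sum w U k (\<lambda>_. 1)"
  unfolding rej_expect_def using rej_sum_remove_indicator[OF assms, of w "\<lambda>_. 1"] by simp

text \<open>Removing a unit \<open>a\<close> from the population and one draw from the sample can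
  only lower the inclusion probability of another unit \<open>i\<close>; after expanding both
  sides over \<open>a\<close> and \<open>i\<close> this is Newton's inequality on \<open>U - {a, i}\<close>.\<close>

lemma rej_incl_remove_le:
  assumes fin: "finite U" and "a \<in> U" "i \<in> U" "a \<noteq> i" and k: "1 \<le> k" "k \<le> card U"
    and wpos: "\<And>j. j \<in> U \<Longrightarrow> w j > 0"
  shows "rej_incl w (U - {a}) (k - 1) i \<le> rej_incl w U k i"
proof (cases "k = 1")
  case True
  have "rej_incl w U k i \<ge> 0"
    using wpos by (intro rej_expect_nonneg) (auto intro: less_imp_le)
  then show ?thesis using True fin by (simp add: rej_expect_def rej_sum_0)
next
  case False
  define m where "m = k - 2"
  have m: "k = m + 2" using k False unfolding m_def by simp
  define R where "R = U - {a} - {i}"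
  have finR: "finite (U - {a})" "finite (U - {i})" using fin by auto
  have iUa: "i \<in> U - {a}" "a \<in> U - {i}" and R2: "U - {i} - {a} = R"
    using assms unfolding R_def by auto
  define e where "e j = rej_sum w R j (\<lambda>_. 1)" for j
  have W: "rej_sum w U k (\<lambda>_. 1) = (e (m+2) + w i * e (m+1)) + w a * (e (m+1) + w i * e m)"
    using rej_sum_remove[OF fin \<open>a \<in> U\<close>, of k w "\<lambda>_. 1"] m
      rej_sum_remove[OF finR(1) iUa(1), of "m+2" w "\<lambda>_. 1"]
      rej_sum_remove[OF finR(1) iUa(1), of "m+1" w "\<lambda>_. 1"]
    unfolding e_def R_def by simp
  have Si: "rej_sum w U k (\<lambda>s. of_bool (i \<in> s)) = w i * (e (m+1) + w a * e m)"
    using rej_sum_remove_indicator[OF fin \<open>i \<in> U\<close>, of k w "\<lambda>_. 1"] m R2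
      rej_sum_remove[OF finR(2) iUa(2), of "m+1" w "\<lambda>_. 1"]
    unfolding e_def by simp
  have W': "rej_sum w (U - {a}) (k - 1) (\<lambda>_. 1) = e (m+1) + w i * e m"
    using rej_sum_remove[OF finR(1) iUa(1), of "m+1" w "\<lambda>_. 1"] m
    unfolding e_def R_def by simp
  have Si': "rej_sum w (U - {a}) (k - 1) (\<lambda>s. of_bool (i \<in> s)) = w i * e m"
    using rej_sum_remove_indicator[OF finR(1) iUa(1), of "k - 1" w "\<lambda>_. 1"] m
    unfolding e_def R_def by simp
  have "rej_sum w U k (\<lambda>_. 1) > 0" using rej_sum_pos[OF fin k(2)] wpos by blast
  moreover have "rej_sum w (U - {a}) (k - 1) (\<lambda>_. 1) > 0"
    using rej_sum_pos[OF finR(1), of "k-1" w] wpos k assms(2) fin by (simp add: card_Diff_singleton)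
  moreover have "w i * (e m * e (m+2)) \<le> w i * (e (m+1))\<^sup>2"
    unfolding e_def using wpos \<open>i \<in> U\<close> fin
    by (intro mult_left_mono rej_sum_newton) (auto simp: R_def less_imp_le)
  then have "w i * e m * ((e (m+2) + w i * e (m+1)) + w a * (e (m+1) + w i * e m))
      \<le> w i * (e (m+1) + w a * e m) * (e (m+1) + w i * e m)"
    by (simp add: algebra_simps power2_eq_square)
  ultimately show ?thesis
    unfolding rej_expect_def W Si W' Si' by (simp add: divide_simps)
qed

lemma rej_expect_insert_subset:
  assumes "finite U" "a \<in> U" "a \<notin> A" "1 \<le> k" "k \<le> card U" "\<And>j. j \<in> U \<Longrightarrow> w j > 0"
  shows "rej_expect w U k (\<lambda>s. of_bool (insert a A \<subseteq> s))
    = rej_incl w U k a * rej_expect w (U - {a}) (k - 1) (\<lambda>t. of_bool (A \<subseteq> t))"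
proof -
  have "rej_sum w U k (\<lambda>s. of_bool (insert a A \<subseteq> s))
      = rej_sum w U k (\<lambda>s. of_bool (a \<in> s) * of_bool (A \<subseteq> s))"
    by (rule rej_sum_cong) simp
  also have "\<dots> = w a * rej_sum w (U - {a}) (k - 1) (\<lambda>t. of_bool (A \<subseteq> t))"
    using rej_sum_remove_indicator[OF assms(1,2,4)] assms(3) by (simp add: subset_insert)
  moreover have "rej_sum w (U - {a}) (k - 1) (\<lambda>_. 1) > 0"
    using assms by (intro rej_sum_pos) (auto simp: card_Diff_singleton)
  ultimately show ?thesis
    unfolding rej_incl_eq[OF assms(1,2,4)] by (simp add: rej_expect_def)
qed

lemma rej_expect_subset_le_prod:
  assumes "finite A" "finite U" "A \<subseteq> U" "k \<le> card U" "\<And>j. j \<in> U \<Longrightarrow> w j > 0"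
  shows "rej_expect w U k (\<lambda>s. of_bool (A \<subseteq> s)) \<le> (\<Prod>i\<in>A. rej_incl w U k i)"
  using assms
proof (induction A arbitrary: U k rule: finite_induct)
  case empty
  then show ?case using rej_expect_one[of U k w] by simp
next
  case (insert a A)
  have aU: "a \<in> U" and AU: "A \<subseteq> U" and wnn: "\<And>j. j \<in> U \<Longrightarrow> w j \<ge> 0"
    using insert.prems by (auto intro: less_imp_le)
  have incl_nonneg: "rej_incl w U' k' i \<ge> 0" if "U' \<subseteq> U" for U' k' i
    using that wnn by (intro rej_expect_nonneg) auto
  show ?case
  proof (cases "k = 0")
    case True
    then have "rej_expect w U k (\<lambda>s. of_bool (insert a A \<subseteq> s)) = 0"
      using insert.prems(1) by (simp add: rej_expect_def rej_sum_0)
    then show ?thesis using incl_nonneg[of U] by (simp add: prod_nonneg)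
  next
    case False
    then have k1: "k \<ge> 1" by simp
    have "rej_expect w U k (\<lambda>s. of_bool (insert a A \<subseteq> s))
        = rej_incl w U k a * rej_expect w (U - {a}) (k - 1) (\<lambda>t. of_bool (A \<subseteq> t))"
      using insert aU k1 by (intro rej_expect_insert_subset) auto
    also have "\<dots> \<le> rej_incl w U k a * (\<Prod>i\<in>A. rej_incl w U k i)"
    proof (rule mult_left_mono)
      have "rej_expect w (U - {a}) (k - 1) (\<lambda>t. of_bool (A \<subseteq> t))
          \<le> (\<Prod>i\<in>A. rej_incl w (U - {a}) (k - 1) i)"
        using insert aU by (intro insert.IH) (auto simp: card_Diff_singleton)
      also have "\<dots> \<le> (\<Prod>i\<in>A. rej_incl w U k i)"
        using insert aU AU k1 incl_nonneg
        by (intro prod_mono conjI rej_incl_remove_le) auto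
      finally show "rej_expect w (U - {a}) (k - 1) (\<lambda>t. of_bool (A \<subseteq> t)) \<le> \<dots>" .
    qed (use incl_nonneg in simp)
    finally show ?thesis using insert.hyps by simp
  qed
qed

lemma prod_of_bool_mem: "finite X \<Longrightarrow> (\<Prod>i\<in>X. of_bool (i \<in> s) :: real) = of_bool (X \<subseteq> s)"
  by (induction X rule: finite_induct) auto

text \<open>Expanding the product over subsets of \<open>U\<close> and bounding each joint inclusion
  probability by a product of marginal ones shows that the moment generating function of
  the sample is dominated by that of independent Bernoulli draws.\<close>

lemma rej_expect_prod_le:
  assumes fin: "finite U" and "k \<le> card U" "\<And>j. j \<in> U \<Longrightarrow> w j > 0"
    and \<alpha>: "\<And>i. i \<in> U \<Longrightarrow> \<alpha> i \<ge> 0"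
  shows "rej_expect w U k (\<lambda>s. \<Prod>i\<in>U. 1 + \<alpha> i * of_bool (i \<in> s))
    \<le> (\<Prod>i\<in>U. 1 + \<alpha> i * rej_incl w U k i)"
proof -
  have expand: "(\<Prod>i\<in>U. 1 + \<alpha> i * f i) = (\<Sum>X\<in>Pow U. (\<Prod>i\<in>X. \<alpha> i) * (\<Prod>i\<in>X. f i))"
    for f :: "'a \<Rightarrow> real"
    using prod_add[OF fin, of "\<lambda>i. \<alpha> i * f i" "\<lambda>_. 1"]
    by (simp add: add.commute prod.distrib)
  have "rej_expect w U k (\<lambda>s. \<Prod>i\<in>U. 1 + \<alpha> i * of_bool (i \<in> s))
      = (\<Sum>X\<in>Pow U. (\<Prod>i\<in>X. \<alpha> i) * rej_expect w U k (\<lambda>s. of_bool (X \<subseteq> s)))"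
    unfolding expand rej_expect_sum rej_expect_cmult
    using fin by (intro sum.cong refl arg_cong2[where f = "(*)"] rej_expect_cong)
      (auto simp: prod_of_bool_mem finite_subset)
  also have "\<dots> \<le> (\<Sum>X\<in>Pow U. (\<Prod>i\<in>X. \<alpha> i) * (\<Prod>i\<in>X. rej_incl w U k i))"
    using assms by (intro sum_mono mult_left_mono rej_expect_subset_le_prod prod_nonneg)
      (auto dest: finite_subset)
  also have "\<dots> = (\<Prod>i\<in>U. 1 + \<alpha> i * rej_incl w U k i)"
    by (rule expand[symmetric])
  finally show ?thesis .
qed

lemma rej_expect_complement:
  assumes fin: "finite U" and k: "k \<le> card U" and wpos: "\<And>j. j \<in> U \<Longrightarrow> w j > 0"
  shows "rej_expect w U k f = rej_expect (\<lambda>i. 1 / w i) U (card U - k) (\<lambda>t. f (U - t))"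
proof -
  have card_diff: "t \<subseteq> U \<Longrightarrow> card (U - t) = card U - card t" for t
    using fin by (simp add: card_Diff_subset finite_subset)
  have bij: "bij_betw (\<lambda>t. U - t) (ksubsets U (card U - k)) (ksubsets U k)"
    by (rule bij_betw_byWitness[where f' = "\<lambda>t. U - t"])
      (use k in \<open>auto simp: ksubsets_def card_diff\<close>)
  define P where "P = (\<Prod>i\<in>U. w i)"
  have P_pos: "P > 0" unfolding P_def using wpos by (simp add: prod_pos)
  have P_split: "(\<Prod>i\<in>U - t. w i) = P * (\<Prod>i\<in>t. 1 / w i)" if "t \<subseteq> U" for t
  proof -
    have "P = (\<Prod>i\<in>U - t. w i) * (\<Prod>i\<in>t. w i)"
      unfolding P_def using prod.subset_diff[OF that fin] by simp
    moreover have "(\<Prod>i\<in>t. w i) * (\<Prod>i\<in>t. 1 / w i) = 1"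
      using that wpos by (simp add: prod.distrib[symmetric] subset_iff less_imp_neq[symmetric]
          prod.neutral)
    ultimately show ?thesis by (metis mult.assoc mult.right_neutral)
  qed
  have "rej_sum w U k g = P * rej_sum (\<lambda>i. 1 / w i) U (card U - k) (\<lambda>t. g (U - t))" for g
    unfolding rej_sum_def sum.reindex_bij_betw[OF bij, symmetric] sum_distrib_left
    by (intro sum.cong refl) (auto simp: ksubsets_def P_split)
  then show ?thesis unfolding rej_expect_def using P_pos by simp
qed

section \<open>Elementary exponential inequalities\<close>

lemma fact_ge_two_mult_three_power: "2 * 3 ^ n \<le> (fact (n + 2) :: nat)"
proof (induction n)
  case (Suc n)
  have "fact (Suc n + 2) = Suc (n + 2) * (fact (n + 2) :: nat)"
    by (simp only: add_Suc fact_Suc of_nat_id)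
  also have "\<dots> \<ge> 3 * fact (n + 2)" by (intro mult_right_mono) auto
  finally show ?case using Suc by simp
qed (simp add: fact_numeral)

text \<open>The Taylor coefficients of \<open>exp\<close> beyond the linear term are dominated by the
  geometric series \<open>x\<^sup>2/2 \<cdot> (x/3)\<^sup>n\<close>.\<close>

lemma exp_le_bernstein:
  fixes x :: real
  assumes x: "0 \<le> x" "x < 3"
  shows "exp x \<le> 1 + x + x\<^sup>2 / (2 * (1 - x / 3))"
proof -
  define f where "f n = x ^ n / fact n" for n
  have "f sums exp x"
    unfolding f_def using exp_converges[of x] by (simp add: divide_inverse_commute scaleR_conv_of_real)
  then have "(\<lambda>n. f (Suc (Suc n))) sums (exp x - 1 - x)"
    using sums_Suc_iff[of f "exp x - 1"] sums_Suc_iff[of "\<lambda>n. f (Suc n)" "exp x - 1 - x"]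
    by (simp add: f_def)
  then have series: "(\<lambda>n. x ^ (n + 2) / fact (n + 2)) sums (exp x - 1 - x)"
    by (simp only: f_def add_2_eq_Suc')
  have geometric: "(\<lambda>n. x\<^sup>2 / 2 * (x / 3) ^ n) sums (x\<^sup>2 / 2 * (1 / (1 - x / 3)))"
    using x by (intro sums_mult geometric_sums) simp
  have "x ^ (n + 2) / fact (n + 2) \<le> x\<^sup>2 / 2 * (x / 3) ^ n" for n
  proof -
    have "real (2 * 3 ^ n) \<le> real (fact (n + 2))"
      using fact_ge_two_mult_three_power[of n] by linarith
    then have "x ^ (n + 2) / fact (n + 2) \<le> x ^ (n + 2) / (2 * 3 ^ n)"
      using x by (intro divide_left_mono) (simp_all only: of_nat_fact of_nat_mult of_nat_power
          of_nat_numeral zero_le_power mult_pos_pos fact_gt_zero zero_less_numeral zero_less_power)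
    also have "\<dots> = x\<^sup>2 / 2 * (x / 3) ^ n"
      by (simp add: power_add power_divide field_simps power2_eq_square)
    finally show ?thesis .
  qed
  then have "exp x - 1 - x \<le> x\<^sup>2 / 2 * (1 / (1 - x / 3))"
    using sums_le[OF _ series geometric] by blast
  then show ?thesis by (simp add: field_simps)
qed

lemma exp_minus_le_quadratic:
  fixes y :: real
  assumes "0 \<le> y"
  shows "exp (- y) \<le> 1 - y + y\<^sup>2 / 2"
proof -
  have pos: "0 < 1 + y + y\<^sup>2 / 2" using assms by (simp add: add_pos_nonneg)
  have "exp (- y) = 1 / exp y" by (simp add: exp_minus inverse_eq_divide)
  also have "\<dots> \<le> 1 / (1 + y + y\<^sup>2 / 2)"
    using exp_lower_Taylor_quadratic[OF assms] pos by (intro divide_left_mono) auto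
  also have "\<dots> \<le> 1 - y + y\<^sup>2 / 2"
  proof -
    have "(1 - y + y\<^sup>2 / 2) * (1 + y + y\<^sup>2 / 2) = 1 + y ^ 4 / 4"
      by (simp add: algebra_simps power2_eq_square power4_eq_xxxx)
    then show ?thesis using pos by (simp add: divide_simps)
  qed
  finally show ?thesis .
qed

lemma exp_minus_one_minus_le:
  fixes u :: real
  assumes "\<bar>u\<bar> < 3"
  shows "exp u - 1 - u \<le> u\<^sup>2 / (2 * (1 - \<bar>u\<bar> / 3))"
proof (cases "u \<ge> 0")
  case True
  then show ?thesis using exp_le_bernstein[of u] assms by simp
next
  case False
  have "exp u - 1 - u \<le> u\<^sup>2 / 2" using exp_minus_le_quadratic[of "- u"] False by simp
  also have "\<dots> \<le> u\<^sup>2 / (2 * (1 - \<bar>u\<bar> / 3))"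
    using assms False by (intro divide_left_mono) auto
  finally show ?thesis .
qed

lemma exp_minus_one_minus_scaled_le:
  fixes \<sigma> l c \<beta> :: real
  assumes "\<bar>\<sigma>\<bar> = 1" "0 \<le> c" "c \<le> \<beta>" "0 < l" "l * \<beta> < 3"
  shows "exp (\<sigma> * l * c) - 1 - \<sigma> * l * c \<le> c\<^sup>2 * (l\<^sup>2 / (2 * (1 - l * \<beta> / 3)))"
proof -
  have abs: "\<bar>\<sigma> * l * c\<bar> = l * c" "l * c \<le> l * \<beta>"
    using assms by (auto simp: abs_mult intro: mult_left_mono)
  then have lc: "l * c < 3" using assms(5) by linarith
  then have "exp (\<sigma> * l * c) - 1 - \<sigma> * l * c \<le> (\<sigma> * l * c)\<^sup>2 / (2 * (1 - l * c / 3))"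
    using exp_minus_one_minus_le[of "\<sigma> * l * c"] abs by simp
  also have "\<dots> \<le> (\<sigma> * l * c)\<^sup>2 / (2 * (1 - l * \<beta> / 3))"
    using abs assms lc by (intro divide_left_mono mult_pos_pos) auto
  also have "\<dots> = c\<^sup>2 * (l\<^sup>2 / (2 * (1 - l * \<beta> / 3)))"
    using power2_abs[of \<sigma>] assms(1) by (simp add: power_mult_distrib)
  finally show ?thesis .
qed

lemma prod_one_plus_le_exp_sum:
  fixes u :: "'a \<Rightarrow> real"
  assumes "finite U" "\<And>i. i \<in> U \<Longrightarrow> 0 \<le> 1 + u i"
  shows "(\<Prod>i\<in>U. 1 + u i) \<le> exp (\<Sum>i\<in>U. u i)"
proof -
  have "(\<Prod>i\<in>U. 1 + u i) \<le> (\<Prod>i\<in>U. exp (u i))"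
    using assms(2) by (intro prod_mono) (auto simp: add.commute)
  then show ?thesis by (simp add: exp_sum[OF assms(1)])
qed

text \<open>The choice of the Chernoff parameter \<open>l\<close> that turns the Bernstein exponent
  into \<open>-L\<close> at the deviation \<open>T = 2\<beta>L/3 + \<surd>(2\<beta>L)\<close>; the key fact is
  \<open>T\<^sup>2 \<ge> 2\<beta>L (1 + T/3)\<close>.\<close>

lemma bernstein_exponent_le:
  fixes \<beta> L :: real
  assumes b: "\<beta> > 0" and L: "L > 0"
  defines "T \<equiv> 2 * \<beta> * L / 3 + sqrt (2 * \<beta> * L)"
  defines "l \<equiv> 3 * T / (\<beta> * (3 + T))"
  shows "0 < l" "l * \<beta> < 3" "- l * T + l\<^sup>2 * \<beta> / (2 * (1 - l * \<beta> / 3)) \<le> - L"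
proof -
  define u where "u = 2 * \<beta> * L / 3"
  define v where "v = sqrt (2 * \<beta> * L)"
  have u: "u > 0" and v: "v > 0" "v\<^sup>2 = 2 * \<beta> * L"
    unfolding u_def v_def using b L by auto
  have T_pos: "T > 0" unfolding T_def using b L by (intro add_pos_pos) auto
  show "0 < l" unfolding l_def using T_pos b by simp
  have lb: "l * \<beta> = 3 * T / (3 + T)"
  proof -
    have "l * \<beta> = (\<beta> * (3 * T)) / (\<beta> * (3 + T))" unfolding l_def by (simp add: mult.commute)
    also have "\<dots> = 3 * T / (3 + T)" using b by (intro mult_divide_mult_cancel_left) simp
    finally show ?thesis .
  qed
  show "l * \<beta> < 3" unfolding lb using T_pos by (simp add: field_simps)
  have d: "1 - l * \<beta> / 3 = 3 / (3 + T)" unfolding lb using T_pos by (simp add: field_simps)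
  have "l\<^sup>2 * \<beta> / (2 * (3 / (3 + T))) = l * (l * \<beta>) * (3 + T) / 6"
    using T_pos by (simp add: power2_eq_square field_simps)
  also have "\<dots> = l * T / 2" unfolding lb using T_pos by (simp add: field_simps)
  finally have half: "l\<^sup>2 * \<beta> / (2 * (3 / (3 + T))) = l * T / 2" .
  have "- l * T + l\<^sup>2 * \<beta> / (2 * (1 - l * \<beta> / 3)) = - (l * T) / 2"
    unfolding d half by simp
  also have "l * T = 3 * T\<^sup>2 / (\<beta> * (3 + T))" unfolding l_def by (simp add: power2_eq_square)
  finally have exponent: "- l * T + l\<^sup>2 * \<beta> / (2 * (1 - l * \<beta> / 3))
      = - (3 * T\<^sup>2 / (\<beta> * (3 + T))) / 2" .
  have "T\<^sup>2 \<ge> 2 * \<beta> * L + (2 * \<beta> * L / 3) * T"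
  proof -
    have "T = u + v" unfolding T_def u_def v_def ..
    then have "T\<^sup>2 = u\<^sup>2 + 2 * u * v + v\<^sup>2" and "(2 * \<beta> * L / 3) * T = u\<^sup>2 + u * v"
      unfolding u_def by (simp_all add: power2_sum power2_eq_square algebra_simps)
    then show ?thesis using u v by simp
  qed
  then have "L * (2 * \<beta> * (3 + T)) \<le> 3 * T\<^sup>2" by (simp add: algebra_simps)
  moreover have "0 < \<beta> * (3 + T) * 2" using b T_pos by simp
  ultimately have "L \<le> 3 * T\<^sup>2 / (\<beta> * (3 + T)) / 2"
    unfolding divide_divide_eq_left by (subst pos_le_divide_eq) (simp_all add: algebra_simps)
  then show "- l * T + l\<^sup>2 * \<beta> / (2 * (1 - l * \<beta> / 3)) \<le> - L" unfolding exponent by simp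
qed

section \<open>Bernstein's inequality for rejective samples\<close>

locale rej_design =
  fixes w :: "'a \<Rightarrow> real" and U :: "'a set" and k :: nat
  assumes finite_U: "finite U" and k_le: "k \<le> card U" and w_pos: "\<And>i. i \<in> U \<Longrightarrow> w i > 0"
begin

abbreviation expect :: "('a set \<Rightarrow> real) \<Rightarrow> real" where
  "expect f \<equiv> rej_expect w U k f"

abbreviation incl :: "'a \<Rightarrow> real" where
  "incl i \<equiv> rej_incl w U k i"

lemma w_nonneg: "i \<in> U \<Longrightarrow> w i \<ge> 0"
  using w_pos by (auto intro: less_imp_le)

lemma expect_one: "expect (\<lambda>_. 1) = 1"
  by (rule rej_expect_one[OF finite_U k_le w_pos])

lemma expect_mono: "(\<And>s. s \<in> ksubsets U k \<Longrightarrow> f s \<le> g s) \<Longrightarrow> expect f \<le> expect g"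
  by (rule rej_expect_mono) (auto intro: w_nonneg)

lemma incl_nonneg: "incl i \<ge> 0"
  by (rule rej_expect_nonneg) (auto intro: w_nonneg)

lemma incl_le_one: "incl i \<le> 1"
  using expect_mono[of "\<lambda>s. of_bool (i \<in> s)" "\<lambda>_. 1"] expect_one by simp

lemma complement_design: "rej_design (\<lambda>i. 1 / w i) U (card U - k)"
  using finite_U w_pos by unfold_locales auto

lemma expect_complement: "expect f = rej_expect (\<lambda>i. 1 / w i) U (card U - k) (\<lambda>t. f (U - t))"
  by (rule rej_expect_complement[OF finite_U k_le w_pos])

lemma incl_complement:
  assumes "i \<in> U"
  shows "rej_incl (\<lambda>i. 1 / w i) U (card U - k) i = 1 - incl i"
proof -
  have "rej_incl (\<lambda>i. 1 / w i) U (card U - k) i = expect (\<lambda>s. 1 + (- 1) * of_bool (i \<in> s))"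
    unfolding expect_complement using assms
    by (intro rej_expect_cong) (auto simp: ksubsets_def)
  then show ?thesis unfolding rej_expect_add rej_expect_cmult expect_one by simp
qed

lemma exp_sum_of_bool:
  "exp (\<Sum>i\<in>U. \<mu> i * of_bool (i \<in> s)) = (\<Prod>i\<in>U. 1 + (exp (\<mu> i) - 1) * of_bool (i \<in> s))"
  unfolding exp_sum[OF finite_U] by (intro prod.cong) auto

lemma expect_exp_le_prod_nonneg:
  assumes "\<And>i. i \<in> U \<Longrightarrow> 0 \<le> \<mu> i"
  shows "expect (\<lambda>s. exp (\<Sum>i\<in>U. \<mu> i * of_bool (i \<in> s))) \<le> (\<Prod>i\<in>U. 1 + incl i * (exp (\<mu> i) - 1))"
  unfolding exp_sum_of_bool using assms
  by (subst (2) mult.commute, intro rej_expect_prod_le[OF finite_U k_le w_pos]) auto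

text \<open>For nonpositive exponents pass to the complementary sample, whose inclusion
  probabilities are \<open>1 - incl i\<close>.\<close>

lemma expect_exp_le_prod_nonpos:
  assumes "\<And>i. i \<in> U \<Longrightarrow> \<mu> i \<le> 0"
  shows "expect (\<lambda>s. exp (\<Sum>i\<in>U. \<mu> i * of_bool (i \<in> s))) \<le> (\<Prod>i\<in>U. 1 + incl i * (exp (\<mu> i) - 1))"
proof -
  interpret compl: rej_design "\<lambda>i. 1 / w i" U "card U - k" by (rule complement_design)
  have split: "exp (\<Sum>i\<in>U. \<mu> i * of_bool (i \<in> U - t))
      = (\<Prod>i\<in>U. exp (\<mu> i)) * exp (\<Sum>i\<in>U. - \<mu> i * of_bool (i \<in> t))" for t
    unfolding exp_sum[OF finite_U, symmetric] exp_add[symmetric] sum.distrib[symmetric]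
    by (intro arg_cong[where f = exp] sum.cong) auto
  have "expect (\<lambda>s. exp (\<Sum>i\<in>U. \<mu> i * of_bool (i \<in> s)))
      = (\<Prod>i\<in>U. exp (\<mu> i)) * compl.expect (\<lambda>t. exp (\<Sum>i\<in>U. - \<mu> i * of_bool (i \<in> t)))"
    unfolding expect_complement split rej_expect_cmult ..
  also have "\<dots> \<le> (\<Prod>i\<in>U. exp (\<mu> i)) * (\<Prod>i\<in>U. 1 + compl.incl i * (exp (- \<mu> i) - 1))"
    using assms by (intro mult_left_mono compl.expect_exp_le_prod_nonneg prod_nonneg) auto
  also have "\<dots> = (\<Prod>i\<in>U. 1 + incl i * (exp (\<mu> i) - 1))"
    unfolding prod.distrib[symmetric]
    by (intro prod.cong refl) (simp add: incl_complement algebra_simps exp_minus field_simps)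
  finally show ?thesis .
qed

lemma expect_exp_sum_le:
  assumes "(\<forall>i\<in>U. 0 \<le> \<mu> i) \<or> (\<forall>i\<in>U. \<mu> i \<le> 0)"
  shows "expect (\<lambda>s. exp (\<Sum>i\<in>U. \<mu> i * of_bool (i \<in> s))) \<le> exp (\<Sum>i\<in>U. incl i * (exp (\<mu> i) - 1))"
proof -
  have "expect (\<lambda>s. exp (\<Sum>i\<in>U. \<mu> i * of_bool (i \<in> s))) \<le> (\<Prod>i\<in>U. 1 + incl i * (exp (\<mu> i) - 1))"
    using assms
  proof
    assume "\<forall>i\<in>U. 0 \<le> \<mu> i" then show ?thesis by (intro expect_exp_le_prod_nonneg) simp
  next
    assume "\<forall>i\<in>U. \<mu> i \<le> 0" then show ?thesis by (intro expect_exp_le_prod_nonpos) simp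
  qed
  also have "\<dots> \<le> exp (\<Sum>i\<in>U. incl i * (exp (\<mu> i) - 1))"
  proof (rule prod_one_plus_le_exp_sum[OF finite_U])
    fix i
    have "0 \<le> 1 - incl i + incl i * exp (\<mu> i)" using incl_le_one[of i] incl_nonneg[of i] by simp
    then show "0 \<le> 1 + incl i * (exp (\<mu> i) - 1)" by (simp add: algebra_simps)
  qed
  finally show ?thesis .
qed

lemma expect_deviation_le:
  assumes "(\<forall>i\<in>U. 0 \<le> \<mu> i) \<or> (\<forall>i\<in>U. \<mu> i \<le> 0)"
  shows "expect (\<lambda>s. of_bool ((\<Sum>i\<in>U. \<mu> i * (of_bool (i \<in> s) - incl i)) > T))
    \<le> exp (- T + (\<Sum>i\<in>U. incl i * (exp (\<mu> i) - 1 - \<mu> i)))"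
proof -
  define C where "C = exp (- T - (\<Sum>i\<in>U. \<mu> i * incl i))"
  have ind: "of_bool (Y > T) \<le> exp (Y - T)" for Y :: real
    using exp_ge_add_one_self[of "Y - T"] by (auto simp: of_bool_def)
  have rewrite: "exp ((\<Sum>i\<in>U. \<mu> i * (of_bool (i \<in> s) - incl i)) - T)
      = C * exp (\<Sum>i\<in>U. \<mu> i * of_bool (i \<in> s))" for s
    unfolding C_def exp_add[symmetric]
    by (simp add: algebra_simps sum_subtractf)
  have "expect (\<lambda>s. of_bool ((\<Sum>i\<in>U. \<mu> i * (of_bool (i \<in> s) - incl i)) > T))
      \<le> C * expect (\<lambda>s. exp (\<Sum>i\<in>U. \<mu> i * of_bool (i \<in> s)))"
    unfolding rej_expect_cmult[symmetric] rewrite[symmetric] by (intro expect_mono ind)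
  also have "\<dots> \<le> C * exp (\<Sum>i\<in>U. incl i * (exp (\<mu> i) - 1))"
    unfolding C_def by (intro mult_left_mono expect_exp_sum_le assms) simp
  also have "\<dots> = exp (- T + (\<Sum>i\<in>U. incl i * (exp (\<mu> i) - 1 - \<mu> i)))"
    unfolding C_def exp_add[symmetric]
    by (simp add: algebra_simps sum_subtractf sum.distrib)
  finally show ?thesis .
qed

lemma signed_deviation_tail_le:
  assumes \<sigma>: "\<bar>\<sigma>\<bar> = 1" and c: "\<And>i. i \<in> U \<Longrightarrow> 0 \<le> c i \<and> c i \<le> \<beta>"
    and var: "(\<Sum>i\<in>U. incl i * (c i)\<^sup>2) \<le> \<beta>" and l: "0 < l" "l * \<beta> < 3"
  shows "expect (\<lambda>s. of_bool (\<sigma> * (\<Sum>i\<in>U. c i * (of_bool (i \<in> s) - incl i)) > T))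
    \<le> exp (- l * T + l\<^sup>2 * \<beta> / (2 * (1 - l * \<beta> / 3)))"
proof -
  define \<mu> where "\<mu> i = \<sigma> * l * c i" for i
  define K where "K = l\<^sup>2 / (2 * (1 - l * \<beta> / 3))"
  have signs: "(\<forall>i\<in>U. 0 \<le> \<mu> i) \<or> (\<forall>i\<in>U. \<mu> i \<le> 0)"
    using \<sigma> c l unfolding \<mu>_def by (cases "\<sigma> \<ge> 0") (auto simp: mult_nonpos_nonneg)
  have "(\<Sum>i\<in>U. \<mu> i * (of_bool (i \<in> s) - incl i))
      = l * (\<sigma> * (\<Sum>i\<in>U. c i * (of_bool (i \<in> s) - incl i)))" for s
    unfolding \<mu>_def by (simp add: sum_distrib_left mult_ac)
  then have "\<sigma> * (\<Sum>i\<in>U. c i * (of_bool (i \<in> s) - incl i)) > T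
      \<longleftrightarrow> (\<Sum>i\<in>U. \<mu> i * (of_bool (i \<in> s) - incl i)) > l * T" for s
    using l by simp
  then have "expect (\<lambda>s. of_bool (\<sigma> * (\<Sum>i\<in>U. c i * (of_bool (i \<in> s) - incl i)) > T))
      \<le> exp (- (l * T) + (\<Sum>i\<in>U. incl i * (exp (\<mu> i) - 1 - \<mu> i)))"
    using expect_deviation_le[OF signs, of "l * T"] by simp
  also have "\<dots> \<le> exp (- l * T + (\<Sum>i\<in>U. incl i * (c i)\<^sup>2) * K)"
  proof -
    have "exp (\<mu> i) - 1 - \<mu> i \<le> (c i)\<^sup>2 * K" if "i \<in> U" for i
      using exp_minus_one_minus_scaled_le[OF \<sigma> _ _ l] c[OF that] unfolding \<mu>_def K_def by auto
    then have "(\<Sum>i\<in>U. incl i * (exp (\<mu> i) - 1 - \<mu> i)) \<le> (\<Sum>i\<in>U. incl i * ((c i)\<^sup>2 * K))"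
      by (intro sum_mono mult_left_mono incl_nonneg)
    then show ?thesis by (simp add: sum_distrib_right mult.assoc)
  qed
  also have "\<dots> \<le> exp (- l * T + \<beta> * K)"
  proof -
    have "K \<ge> 0" unfolding K_def using l by (intro divide_nonneg_pos) (auto simp: mult.commute)
    then show ?thesis using var by (intro exp_le_cancel_iff[THEN iffD2] add_left_mono mult_right_mono)
  qed
  finally show ?thesis unfolding K_def by (simp add: mult.commute)
qed

lemma deviation_tail_le:
  assumes c: "\<And>i. i \<in> U \<Longrightarrow> 0 \<le> c i \<and> c i \<le> \<beta>"
    and var: "(\<Sum>i\<in>U. incl i * (c i)\<^sup>2) \<le> \<beta>" and "\<beta> > 0" "L > 0"
  shows "expect (\<lambda>s. of_bool (\<bar>\<Sum>i\<in>U. c i * (of_bool (i \<in> s) - incl i)\<bar>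
      > 2 * \<beta> * L / 3 + sqrt (2 * \<beta> * L))) \<le> 2 * exp (- L)"
proof -
  define T where "T = 2 * \<beta> * L / 3 + sqrt (2 * \<beta> * L)"
  define l where "l = 3 * T / (\<beta> * (3 + T))"
  define Z where "Z s = (\<Sum>i\<in>U. c i * (of_bool (i \<in> s) - incl i))" for s
  note exponent = bernstein_exponent_le[OF \<open>\<beta> > 0\<close> \<open>L > 0\<close>, folded T_def, folded l_def]
  have tail: "expect (\<lambda>s. of_bool (\<sigma> * Z s > T)) \<le> exp (- L)" if "\<bar>\<sigma>\<bar> = 1" for \<sigma>
    using signed_deviation_tail_le[OF that c var exponent(1,2), of T] exponent(3)
    unfolding Z_def by (meson exp_le_cancel_iff order_trans)
  have "expect (\<lambda>s. of_bool (\<bar>Z s\<bar> > T))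
      \<le> expect (\<lambda>s. of_bool (1 * Z s > T) + of_bool (- 1 * Z s > T))"
    by (rule expect_mono) auto
  also have "\<dots> \<le> exp (- L) + exp (- L)"
    unfolding rej_expect_add by (intro add_mono tail) auto
  finally show ?thesis unfolding Z_def T_def by simp
qed

lemma expect_forall_ge:
  assumes "finite I"
  shows "expect (\<lambda>s. of_bool (\<forall>j\<in>I. P j s)) \<ge> 1 - (\<Sum>j\<in>I. expect (\<lambda>s. of_bool (\<not> P j s)))"
proof -
  have "of_bool (\<forall>j\<in>I. P j s) \<ge> 1 + (- 1) * (\<Sum>j\<in>I. of_bool (\<not> P j s) :: real)" for s
  proof (cases "\<forall>j\<in>I. P j s")
    case False
    then obtain j where "j \<in> I" "\<not> P j s" by blast
    then have "1 \<le> (\<Sum>j\<in>I. of_bool (\<not> P j s) :: real)"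
      using assms member_le_sum[of j I "\<lambda>j. of_bool (\<not> P j s) :: real"] by simp
    then show ?thesis using False by simp
  qed (simp add: sum_nonneg)
  then have "expect (\<lambda>s. 1 + (- 1) * (\<Sum>j\<in>I. of_bool (\<not> P j s))) \<le> expect (\<lambda>s. of_bool (\<forall>j\<in>I. P j s))"
    by (intro expect_mono) simp
  then show ?thesis unfolding rej_expect_add rej_expect_cmult rej_expect_sum expect_one by simp
qed

end

section \<open>The Sauer--Shelah lemma\<close>

definition set_shatters :: "'a set set \<Rightarrow> 'a set \<Rightarrow> bool" where
  "set_shatters F C \<longleftrightarrow> (\<forall>B\<subseteq>C. \<exists>S\<in>F. S \<inter> C = B)"

lemma set_shatters_Un_trace:
  assumes "set_shatters ({S\<in>F. x \<notin> S} \<union> (\<lambda>S. S - {x}) ` {S\<in>F. x \<in> S}) C" "x \<notin> C"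
  shows "set_shatters F C"
  unfolding set_shatters_def
proof (intro allI impI)
  fix B assume "B \<subseteq> C"
  with assms(1) obtain S' where S': "S' \<in> {S\<in>F. x \<notin> S} \<union> (\<lambda>S. S - {x}) ` {S\<in>F. x \<in> S}" "S' \<inter> C = B"
    unfolding set_shatters_def by meson
  from S'(1) consider "S' \<in> F" | S where "S \<in> F" "S' = S - {x}" by blast
  then show "\<exists>S\<in>F. S \<inter> C = B"
  proof cases
    case (2 S)
    then have "S \<inter> C = B" using S'(2) assms(2) by blast
    then show ?thesis using 2(1) by blast
  qed (use S'(2) in blast)
qed

lemma set_shatters_insert_Int_trace:
  assumes "set_shatters ({S\<in>F. x \<notin> S} \<inter> (\<lambda>S. S - {x}) ` {S\<in>F. x \<in> S}) C" "x \<notin> C"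
  shows "set_shatters F (insert x C)"
  unfolding set_shatters_def
proof (intro allI impI)
  fix B assume "B \<subseteq> insert x C"
  then have "B - {x} \<subseteq> C" by blast
  with assms(1) obtain T where T: "T \<in> {S\<in>F. x \<notin> S} \<inter> (\<lambda>S. S - {x}) ` {S\<in>F. x \<in> S}" "T \<inter> C = B - {x}"
    unfolding set_shatters_def by meson
  from T(1) have "T \<in> F" "x \<notin> T" "insert x T \<in> F" by (auto simp: insert_absorb)
  show "\<exists>S\<in>F. S \<inter> insert x C = B"
  proof (cases "x \<in> B")
    case True
    then have "insert x T \<inter> insert x C = B" using T(2) by blast
    then show ?thesis using \<open>insert x T \<in> F\<close> by blast
  next
    case False
    then have "T \<inter> insert x C = B" using T(2) \<open>x \<notin> T\<close> by blast
    then show ?thesis using \<open>T \<in> F\<close> by blast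
  qed
qed

lemma card_shattered_traces_le:
  fixes F :: "'a set set"
  assumes "finite X" "x \<notin> X"
  defines "F0 \<equiv> {S\<in>F. x \<notin> S}" and "F1 \<equiv> (\<lambda>S. S - {x}) ` {S\<in>F. x \<in> S}"
  shows "card {C. C \<subseteq> X \<and> set_shatters (F0 \<union> F1) C} + card {C. C \<subseteq> X \<and> set_shatters (F0 \<inter> F1) C}
    \<le> card {C. C \<subseteq> insert x X \<and> set_shatters F C}"
proof -
  define Sh where "Sh G = {C. C \<subseteq> X \<and> set_shatters G C}" for G
  have x_notin: "x \<notin> C" if "C \<in> Sh G" for C G using that assms(2) unfolding Sh_def by blast
  have "inj_on (insert x) (Sh G)" for G using x_notin by (intro inj_onI) (metis Diff_insert_absorb)
  moreover have "Sh G' \<inter> insert x ` Sh G = {}" for G G' using x_notin by blast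
  moreover have "finite (Sh G)" for G unfolding Sh_def using assms(1) by simp
  ultimately have "card (Sh (F0 \<union> F1)) + card (Sh (F0 \<inter> F1))
      = card (Sh (F0 \<union> F1) \<union> insert x ` Sh (F0 \<inter> F1))"
    by (simp add: card_Un_disjoint card_image)
  also have "\<dots> \<le> card {C. C \<subseteq> insert x X \<and> set_shatters F C}"
  proof (rule card_mono)
    show "finite {C. C \<subseteq> insert x X \<and> set_shatters F C}" using assms(1) by simp
    show "Sh (F0 \<union> F1) \<union> insert x ` Sh (F0 \<inter> F1) \<subseteq> {C. C \<subseteq> insert x X \<and> set_shatters F C}"
      using x_notin unfolding F0_def F1_def
      by (auto intro: set_shatters_Un_trace set_shatters_insert_Int_trace simp: Sh_def)
  qed
  finally show ?thesis unfolding Sh_def .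
qed

text \<open>Splitting \<open>F\<close> according to
  membership of a point \<open>x\<close> into \<open>F\<^sub>0\<close> and the traces \<open>F\<^sub>1\<close> of the sets
  containing \<open>x\<close>, \<open>|F| = |F\<^sub>0 \<union> F\<^sub>1| + |F\<^sub>0 \<inter> F\<^sub>1|\<close>; the sets shattered by the
  union, and the sets shattered by the intersection extended by \<open>x\<close>, are disjoint
  families of sets shattered by \<open>F\<close>.\<close>

lemma card_le_card_shattered:
  assumes "finite X" "\<forall>S\<in>F. S \<subseteq> X"
  shows "card F \<le> card {C. C \<subseteq> X \<and> set_shatters F C}"
  using assms
proof (induction X arbitrary: F rule: finite_induct)
  case empty
  then have "F \<subseteq> {{}}" by auto
  show ?case
  proof (cases "F = {}")
    case False
    with \<open>F \<subseteq> {{}}\<close> have F: "F = {{}}" by (meson subset_singletonD)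
    have "{C. C \<subseteq> {} \<and> set_shatters F C} = {{}}" unfolding F by (auto simp: set_shatters_def)
    then show ?thesis unfolding F by simp
  qed simp
next
  case (insert x X)
  define F0 where "F0 = {S\<in>F. x \<notin> S}"
  define F1 where "F1 = (\<lambda>S. S - {x}) ` {S\<in>F. x \<in> S}"
  have "F \<subseteq> Pow (insert x X)" using insert.prems by blast
  then have finF: "finite F" using insert.hyps(1) by (simp add: finite_subset)
  have "card (F0 \<union> {S\<in>F. x \<in> S}) = card F0 + card {S\<in>F. x \<in> S}"
    using finF unfolding F0_def by (intro card_Un_disjoint) auto
  moreover have "F0 \<union> {S\<in>F. x \<in> S} = F" unfolding F0_def by blast
  ultimately have "card F = card F0 + card {S\<in>F. x \<in> S}" by simp
  also have "card {S\<in>F. x \<in> S} = card F1"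
    unfolding F1_def by (rule card_image[symmetric]) (auto simp: inj_on_def)
  also have "card F0 + card F1 = card (F0 \<union> F1) + card (F0 \<inter> F1)"
    using finF unfolding F0_def F1_def by (intro card_Un_Int) auto
  also have "\<dots> \<le> card {C. C \<subseteq> X \<and> set_shatters (F0 \<union> F1) C}
      + card {C. C \<subseteq> X \<and> set_shatters (F0 \<inter> F1) C}"
  proof -
    have "\<forall>S\<in>F0 \<union> F1. S \<subseteq> X" using insert.prems unfolding F0_def F1_def by auto
    then show ?thesis by (intro add_mono insert.IH) auto
  qed
  also have "\<dots> \<le> card {C. C \<subseteq> insert x X \<and> set_shatters F C}"
    unfolding F0_def F1_def by (rule card_shattered_traces_le[OF insert.hyps])
  finally show ?case .
qed

lemma sum_binomial_le_power: "(\<Sum>j\<le>V. m choose j) \<le> (m + 1) ^ V"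
proof -
  have "(\<Sum>j\<le>V. m choose j) \<le> (\<Sum>j\<le>V. (V choose j) * m ^ j * 1 ^ (V - j))"
  proof (rule sum_mono)
    fix j assume "j \<in> {..V}"
    have "m choose j \<le> m ^ j"
      by (cases "j \<le> m") (auto simp: binomial_le_pow binomial_eq_0)
    also have "\<dots> \<le> (V choose j) * m ^ j"
      using \<open>j \<in> {..V}\<close> by (simp add: Suc_leI zero_less_binomial)
    finally show "m choose j \<le> (V choose j) * m ^ j * 1 ^ (V - j)" by simp
  qed
  also have "\<dots> = (m + 1) ^ V" using binomial[of m 1 V] by simp
  finally show ?thesis .
qed

lemma sauer_shelah:
  assumes "finite X" "\<forall>S\<in>F. S \<subseteq> X" "\<And>C. C \<subseteq> X \<Longrightarrow> set_shatters F C \<Longrightarrow> card C \<le> V"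
  shows "card F \<le> (card X + 1) ^ V"
proof -
  have fin: "finite {C. C \<subseteq> X \<and> P C}" for P using assms(1) by simp
  have "card F \<le> card {C. C \<subseteq> X \<and> set_shatters F C}"
    by (rule card_le_card_shattered[OF assms(1,2)])
  also have "\<dots> \<le> card (\<Union>j\<le>V. {C. C \<subseteq> X \<and> card C = j})"
    using assms(3) fin by (intro card_mono) auto
  also have "\<dots> = (\<Sum>j\<le>V. card {C. C \<subseteq> X \<and> card C = j})"
    using fin by (intro card_UN_disjoint) auto
  also have "\<dots> = (\<Sum>j\<le>V. card X choose j)" using n_subsets[OF assms(1)] by simp
  also have "\<dots> \<le> (card X + 1) ^ V" by (rule sum_binomial_le_power)
  finally show ?thesis .
qed

section \<open>Uniform deviation of the Horvitz--Thompson risk\<close>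

context rej_design
begin

text \<open>The error of the Horvitz--Thompson estimate of \<open>card B / card U\<close>.\<close>

definition ht_deviation :: "'a set \<Rightarrow> 'a set \<Rightarrow> real" where
  "ht_deviation B s = (\<Sum>i\<in>U. of_bool (i \<in> B) / (card U * incl i) * (of_bool (i \<in> s) - incl i))"

lemma ht_deviation_uniform_ge:
  fixes \<pi> L :: real
  assumes "U \<noteq> {}" "finite \<A>" and \<pi>: "\<pi> > 0" "\<And>i. i \<in> U \<Longrightarrow> \<pi> \<le> incl i" and "L > 0"
  defines "\<beta> \<equiv> 1 / (card U * \<pi>)"
  shows "expect (\<lambda>s. of_bool (\<forall>B\<in>\<A>. \<bar>ht_deviation B s\<bar> \<le> 2 * \<beta> * L / 3 + sqrt (2 * \<beta> * L)))
    \<ge> 1 - card \<A> * (2 * exp (- L))"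
proof -
  have U: "card U > 0" using assms(1) finite_U by (simp add: card_gt_0_iff)
  have incl_pos: "incl i > 0" if "i \<in> U" for i using \<pi> that by (meson less_le_trans)
  define c where "c B i = of_bool (i \<in> B) / (card U * incl i)" for B i
  have c: "0 \<le> c B i \<and> c B i \<le> \<beta>" if "i \<in> U" for B i
  proof -
    have "c B i \<le> 1 / (card U * incl i)"
      unfolding c_def using incl_pos[OF that] by (simp add: divide_right_mono)
    also have "\<dots> \<le> \<beta>"
      unfolding \<beta>_def using \<pi> that U incl_pos[OF that] by (intro divide_left_mono mult_left_mono) auto
    finally show ?thesis unfolding c_def using incl_nonneg[of i] by simp
  qed
  have var: "(\<Sum>i\<in>U. incl i * (c B i)\<^sup>2) \<le> \<beta>" for B
  proof -
    have "(\<Sum>i\<in>U. incl i * (c B i)\<^sup>2) \<le> (\<Sum>i\<in>U. 1 / (card U * card U * \<pi>))"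
    proof (rule sum_mono)
      fix i assume i: "i \<in> U"
      note incl_pos[OF i]
      then have "incl i * (c B i)\<^sup>2 = of_bool (i \<in> B) / (card U * card U * incl i)"
        unfolding c_def by (simp add: power2_eq_square field_simps)
      also have "\<dots> \<le> 1 / (card U * card U * incl i)" using \<open>incl i > 0\<close> by (simp add: divide_right_mono)
      also have "\<dots> \<le> 1 / (card U * card U * \<pi>)" using \<pi> i U incl_pos[OF i]
        by (intro divide_left_mono mult_left_mono) auto
      finally show "incl i * (c B i)\<^sup>2 \<le> 1 / (card U * card U * \<pi>)" .
    qed
    also have "\<dots> = \<beta>" unfolding \<beta>_def using U by simp
    finally show ?thesis .
  qed
  have "expect (\<lambda>s. of_bool (\<forall>B\<in>\<A>. \<bar>ht_deviation B s\<bar> \<le> 2 * \<beta> * L / 3 + sqrt (2 * \<beta> * L)))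
      \<ge> 1 - (\<Sum>B\<in>\<A>. expect (\<lambda>s. of_bool (\<not> \<bar>ht_deviation B s\<bar> \<le> 2 * \<beta> * L / 3 + sqrt (2 * \<beta> * L))))"
    by (rule expect_forall_ge[OF assms(2)])
  moreover have "(\<Sum>B\<in>\<A>. expect (\<lambda>s. of_bool (\<not> \<bar>ht_deviation B s\<bar> \<le> 2 * \<beta> * L / 3 + sqrt (2 * \<beta> * L))))
      \<le> (\<Sum>B\<in>\<A>. 2 * exp (- L))"
    using deviation_tail_le[OF c var _ \<open>L > 0\<close>] \<pi> U
    by (intro sum_mono) (simp add: ht_deviation_def c_def[symmetric] not_le \<beta>_def)
  ultimately show ?thesis by simp
qed

end

text \<open>Rejective sampling with canonical parameters \<open>p\<close> is the design with odds \<open>p/(1 - p)\<close>: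
  dividing \<open>rej_weight\<close> by \<open>\<Prod>i. 1 - p i\<close> leaves \<open>\<Prod>i\<in>s. p i / (1 - p i)\<close>.\<close>

lemma rej_weight_eq:
  assumes p: "\<forall>i\<in>{1..N}. 0 < p i \<and> p i < 1" and s: "s \<subseteq> {1..N}"
  shows "rej_weight p N s = (\<Prod>i\<in>{1..N}. 1 - p i) * (\<Prod>i\<in>s. p i / (1 - p i))"
proof -
  have "(\<Prod>i\<in>{1..N}. 1 - p i) = (\<Prod>i\<in>{1..N} - s. 1 - p i) * (\<Prod>i\<in>s. 1 - p i)"
    using prod.subset_diff[OF s] by simp
  moreover have "(\<Prod>i\<in>s. 1 - p i) * (\<Prod>i\<in>s. p i / (1 - p i)) = (\<Prod>i\<in>s. p i)"
    unfolding prod.distrib[symmetric]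
  proof (intro prod.cong refl)
    fix i assume "i \<in> s"
    then have "p i < 1" using p s by auto
    then show "(1 - p i) * (p i / (1 - p i)) = p i" by simp
  qed
  ultimately show ?thesis unfolding rej_weight_def by (simp add: mult_ac)
qed

locale rejective_sampling =
  fixes p :: "nat \<Rightarrow> real" and N n :: nat
  assumes n_le_N: "n \<le> N" and p_range: "\<forall>i\<in>{1..N}. 0 < p i \<and> p i < 1"
begin

sublocale rej_design "\<lambda>i. p i / (1 - p i)" "{1..N}" n
  using n_le_N p_range by unfold_locales auto

lemma rej_prob_eq_expect: "rej_prob p N n A = expect (\<lambda>s. of_bool (A s))"
proof -
  define P where "P = (\<Prod>i\<in>{1..N}. 1 - p i)"
  have "P > 0" unfolding P_def using p_range by (intro prod_pos) auto
  have samples: "samples N n = ksubsets {1..N} n" unfolding samples_def ksubsets_def ..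
  have "(\<Sum>s\<in>{s\<in>samples N n. A s}. rej_weight p N s)
      = (\<Sum>s\<in>ksubsets {1..N} n. if A s then rej_weight p N s else 0)"
    unfolding samples by (rule sum.inter_filter[OF finite_ksubsets[OF finite_U]])
  also have "\<dots> = P * rej_sum (\<lambda>i. p i / (1 - p i)) {1..N} n (\<lambda>s. of_bool (A s))"
    unfolding rej_sum_def sum_distrib_left
    by (intro sum.cong refl) (auto simp: rej_weight_eq[OF p_range] P_def ksubsets_def)
  finally have "(\<Sum>s\<in>{s\<in>samples N n. A s}. rej_weight p N s) = \<dots>" .
  moreover have "(\<Sum>s\<in>samples N n. rej_weight p N s) = P * rej_sum (\<lambda>i. p i / (1 - p i)) {1..N} n (\<lambda>_. 1)"
    unfolding samples rej_sum_def sum_distrib_left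
    by (intro sum.cong refl) (auto simp: rej_weight_eq[OF p_range] P_def ksubsets_def)
  ultimately show ?thesis unfolding rej_prob_def rej_expect_def using \<open>P > 0\<close> by simp
qed

lemma incl_prob_eq_incl: "incl_prob p N n i = incl i"
  unfolding incl_prob_def rej_prob_eq_expect ..

lemma HT_risk_minus_emp_risk:
  assumes "\<forall>i\<in>{1..N}. 0 < incl_prob p N n i"
  shows "HT_risk p N n x y s g - emp_risk N x y g = ht_deviation {i\<in>{1..N}. g (x i) \<noteq> y i} s"
proof -
  have "incl i \<noteq> 0" if "i \<in> {1..N}" for i
    using bspec[OF assms that] by (simp add: incl_prob_eq_incl)
  then have "ht_deviation {i\<in>{1..N}. g (x i) \<noteq> y i} s
      = (\<Sum>i=1..N. 1 / real N * (of_bool (i \<in> s) / incl i * of_bool (g (x i) \<noteq> y i))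
          - 1 / real N * of_bool (g (x i) \<noteq> y i))"
    unfolding ht_deviation_def by (intro sum.cong refl) (auto simp: field_simps)
  then show ?thesis
    unfolding HT_risk_def emp_risk_def incl_prob_eq_incl
    by (simp add: sum_subtractf sum_distrib_left of_bool_def)
qed

end

text \<open>The errors of the classifiers on the population are traces of the sets
  \<open>{z. g z = 1}\<close>, so Sauer--Shelah bounds their number.\<close>

lemma card_error_patterns_le:
  assumes "finite U" and G: "\<forall>g\<in>G. \<forall>z. g z \<in> {-1, 1}" "has_VC_dim G V"
    and y: "\<forall>i\<in>U. y i \<in> {-1, 1}"
  shows "card ((\<lambda>g. {i\<in>U. g (x i) \<noteq> y i}) ` G) \<le> (card U + 1) ^ V"
proof -
  define F where "F = (\<lambda>g. {z\<in>x ` U. g z = 1}) ` G"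
  have "(\<lambda>g. {i\<in>U. g (x i) \<noteq> y i}) ` G = (\<lambda>S. {i\<in>U. (x i \<in> S) \<noteq> (y i = 1)}) ` F"
    unfolding F_def image_image using G(1) y by (intro image_cong refl Collect_cong) fastforce
  moreover have "finite F"
  proof (rule finite_subset)
    show "F \<subseteq> Pow (x ` U)" unfolding F_def by (rule image_subsetI) auto
  qed (use assms(1) in simp)
  ultimately have "card ((\<lambda>g. {i\<in>U. g (x i) \<noteq> y i}) ` G) \<le> card F"
    by (simp add: card_image_le)
  also have "\<dots> \<le> (card (x ` U) + 1) ^ V"
  proof (rule sauer_shelah)
    fix C assume C: "C \<subseteq> x ` U" "set_shatters F C"
    have "shatters G C" unfolding shatters_def
    proof (intro allI impI)
      fix B assume "B \<subseteq> C"
      then obtain g where "g \<in> G" "{z\<in>x ` U. g z = 1} \<inter> C = B"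
        using C(2) unfolding set_shatters_def F_def by blast
      then show "\<exists>g\<in>G. {c\<in>C. g c = 1} = B" using C(1) by blast
    qed
    then show "card C \<le> V" using G(2) C(1) assms(1) finite_subset
      unfolding has_VC_dim_def by blast
  qed (use assms(1) in \<open>auto simp: F_def\<close>)
  also have "\<dots> \<le> (card U + 1) ^ V" by (simp add: card_image_le[OF assms(1)] power_mono)
  finally show ?thesis .
qed

lemma union_bound_le:
  fixes \<delta> M :: real
  assumes "0 < \<delta>" "0 < M" "real c \<le> M ^ V"
  shows "c * (2 * exp (- (ln (2 / \<delta>) + real V * ln M))) \<le> \<delta>"
proof -
  have "exp (- (ln (2 / \<delta>) + real V * ln M)) = inverse (2 / \<delta>) * inverse (M ^ V)"
    unfolding minus_add_distrib exp_add exp_minus exp_of_nat_mult using assms(1,2) by simp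
  then have "2 * exp (- (ln (2 / \<delta>) + real V * ln M)) = \<delta> / M ^ V"
    by (simp add: field_simps)
  moreover have "c * (\<delta> / M ^ V) \<le> M ^ V * (\<delta> / M ^ V)"
    using assms by (intro mult_right_mono) simp_all
  ultimately show ?thesis using assms(2) by simp
qed

theorem proposition1:
  fixes N n V :: nat and p :: "nat \<Rightarrow> real" and G :: "('a \<Rightarrow> int) set"
    and x :: "nat \<Rightarrow> 'a" and y :: "nat \<Rightarrow> int" and \<delta> :: real
  assumes "1 \<le> n" "n \<le> N"
    and "\<forall>i\<in>{1..N}. 0 < p i \<and> p i < 1"
    and "(\<Sum>i=1..N. p i) = real n"
    and "\<forall>i\<in>{1..N}. 0 < incl_prob p N n i"
    and "\<forall>g\<in>G. \<forall>z. g z \<in> {-1, 1}"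
    and "has_VC_dim G V"
    and "\<forall>i\<in>{1..N}. y i \<in> {-1, 1}"
    and "0 < \<delta>" "\<delta> < 1"
  shows "let \<kappa> = (real n / real N) / (MIN i\<in>{1..N}. incl_prob p N n i);
             t = ln (2 / \<delta>) + real V * ln (real N + 1)
         in rej_prob p N n (\<lambda>s. \<forall>g\<in>G.
              \<bar>HT_risk p N n x y s g - emp_risk N x y g\<bar>
                \<le> 2 * \<kappa> * t / (3 * real n) + sqrt (2 * \<kappa> * t / real n))
            \<ge> 1 - \<delta>"
proof -
  interpret rejective_sampling p N n using assms(2,3) by unfold_locales
  define \<pi> where "\<pi> = (MIN i\<in>{1..N}. incl_prob p N n i)"
  define L where "L = ln (2 / \<delta>) + real V * ln (real N + 1)"
  define \<beta> where "\<beta> = 1 / (card {1..N} * \<pi>)"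
  define T where "T = 2 * \<beta> * L / 3 + sqrt (2 * \<beta> * L)"
  define errors where "errors g = {i\<in>{1..N}. g (x i) \<noteq> y i}" for g :: "'a \<Rightarrow> int"
  have N: "{1..N} \<noteq> {}" using assms(1,2) by simp
  have "\<pi> \<in> incl_prob p N n ` {1..N}" unfolding \<pi>_def using N by (intro Min_in) auto
  then have \<pi>: "\<pi> > 0" "\<And>i. i \<in> {1..N} \<Longrightarrow> \<pi> \<le> incl i"
    using assms(5) unfolding \<pi>_def incl_prob_eq_incl[symmetric] by (auto intro: Min_le)
  have "L > 0" unfolding L_def using assms(9,10) by (intro add_pos_nonneg) auto
  have threshold:
    "2 * (real n / real N / \<pi>) * L / (3 * real n) + sqrt (2 * (real n / real N / \<pi>) * L / real n) = T"
    unfolding T_def \<beta>_def using assms(1) by simp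
  have "card (errors ` G) \<le> (N + 1) ^ V"
    using card_error_patterns_le[of "{1..N}" G V y x] assms(6-8) unfolding errors_def by simp
  then have "real (card (errors ` G)) \<le> (real N + 1) ^ V"
    by (metis of_nat_1 of_nat_add of_nat_le_iff of_nat_power)
  then have card_bound: "card (errors ` G) * (2 * exp (- L)) \<le> \<delta>"
    unfolding L_def using assms(9) by (intro union_bound_le) simp_all
  have "rej_prob p N n (\<lambda>s. \<forall>g\<in>G. \<bar>HT_risk p N n x y s g - emp_risk N x y g\<bar> \<le> T)
      = expect (\<lambda>s. of_bool (\<forall>B\<in>errors ` G. \<bar>ht_deviation B s\<bar> \<le> T))"
    unfolding rej_prob_eq_expect HT_risk_minus_emp_risk[OF assms(5)] errors_def by simp
  also have "\<dots> \<ge> 1 - card (errors ` G) * (2 * exp (- L))"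
    unfolding T_def \<beta>_def
    by (rule ht_deviation_uniform_ge[OF N _ \<pi> \<open>L > 0\<close>])
      (auto intro: finite_subset[of _ "Pow {1..N}"] simp: errors_def)
  finally show ?thesis
    unfolding Let_def \<pi>_def[symmetric] L_def[symmetric] threshold using card_bound by linarith
qed

end
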